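(* Let $\mathcal{G}^{\mathbb{c}}=(\mathbb{C},\mathbb{E}^{\mathbb{c}})$ be a C-DMG and let $\mathbb{C}_\mathbb{X},\mathbb{C}_\mathbb{Y},\mathbb{C}_\mathbb{W}$ be pairwise disjoint subsets of $\mathbb{C}$; for a compatible ADMG write $\mathbb{X}=\bigcup_{C\in\mathbb{C}_\mathbb{X}}C$, $\mathbb{Y}=\bigcup_{C\in\mathbb{C}_\mathbb{Y}}C$, $\mathbb{W}=\bigcup_{C\in\mathbb{C}_\mathbb{W}}C$. Assume that either (i) the sizes of the clusters are unknown (so compatible ADMGs may have clusters of any nonempty sizes), or (ii) every cluster contains more than one variable. If $\mathbb{C}_\mathbb{X}$ and $\mathbb{C}_\mathbb{Y}$ are not d-separated by $\mathbb{C}_\mathbb{W}$ in $\mathcal{G}^{\mathbb{c}}$, then there exists an ADMG $\mathcal{G}=(\mathbb{V},\mathbb{E})$ compatible with $\mathcal{G}^{\mathbb{c}}$ (with clusters as in (i) or (ii)) in which $\mathbb{X}$ and $\mathbb{Y}$ are not d-separated by $\mathbb{W}$.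
   Context: An ADMG $\mathcal{G}=(\mathbb{V},\mathbb{E})$ is a graph on a finite vertex set $\mathbb{V}$ whose edges are directed edges $X\rightarrow Y$ and bidirected edges $X\leftrightarrow Y$, such that the directed edges form no directed cycle. A C-DMG $\mathcal{G}^{\mathbb{c}}=(\mathbb{C},\mathbb{E}^{\mathbb{c}})$ compatible with an ADMG $\mathcal{G}=(\mathbb{V},\mathbb{E})$ is the graph whose vertex set $\mathbb{C}=\{C_1,\dots,C_k\}$ is a partition of $\mathbb{V}$ (each vertex $C_i$ is a cluster of variables) and in which, for all $C_i,C_j\in\mathbb{C}$ (possibly $i=j$), $C_i\rightarrow C_j$ (resp. $C_i\leftrightarrow C_j$) is an edge iff there exist $X\in C_i$, $Y\in C_j$ with $X\rightarrow Y$ (resp. $X\leftrightarrow Y$) in $\mathbb{E}$; an ADMG is compatible with a C-DMG if the C-DMG arises from it in this way. A C-DMG may contain directed cycles and self-loops. In a graph $\mathcal{G}^*$ (ADMG or C-DMG), $\mathrm{De}(V)$ denotes the descendants of $V$ (including $V$ itself). A walk $\langle V_1,\dots,V_n\rangle$ is blocked by a set $\mathbb{W}^*$ if (1) $V_1\in\mathbb{W}^*$ or $V_n\in\mathbb{W}^*$; or (2) for some $1<i<n$, the walk contains $V_{i-1}\,*\!-\!*\,V_i\rightarrow V_{i+1}$ or $V_{i-1}\leftarrow V_i\,*\!-\!*\,V_{i+1}$ (any edge type for $*\!-\!*$) and $V_i\in\mathbb{W}^*$; or (3) for some $1<i<n$, the walk contains $V_{i-1}\,*\!\!\rightarrow V_i\leftarrow\!\!*\,V_{i+1}$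 (each edge directed into $V_i$ or bidirected) and $\mathrm{De}(V_i)\cap\mathbb{W}^*=\emptyset$. A walk that is not blocked is active. A path is a walk with no repeated vertex. $\mathbb{W}^*$ d-separates disjoint sets $\mathbb{X}^*$ and $\mathbb{Y}^*$ if it blocks every path from a vertex of $\mathbb{X}^*$ to a vertex of $\mathbb{Y}^*$. *)

theory Defs
  imports Main
begin

text \<open>Mixed graphs (ADMGs and C-DMGs) are given by a vertex set S, a set of directed
edges D (a pair (x,y) means x \<rightarrow> y) and a set of bidirected edges B (symmetric).\<close>

text \<open>Edge marks used along a walk: Fwd at position i means vs!i \<rightarrow> vs!(i+1),
Bwd means vs!i \<leftarrow> vs!(i+1), Bid means vs!i \<leftrightarrow> vs!(i+1).\<close>
datatype emark = Fwd | Bwd | Bid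

definition is_walk :: "'a set \<Rightarrow> ('a \<times> 'a) set \<Rightarrow> ('a \<times> 'a) set \<Rightarrow> 'a list \<Rightarrow> emark list \<Rightarrow> bool" where
  "is_walk S D B vs es \<longleftrightarrow> vs \<noteq> [] \<and> set vs \<subseteq> S \<and> length es = length vs - 1 \<and>
     (\<forall>i < length es.
        (es!i = Fwd \<longrightarrow> (vs!i, vs!Suc i) \<in> D) \<and>
        (es!i = Bwd \<longrightarrow> (vs!Suc i, vs!i) \<in> D) \<and>
        (es!i = Bid \<longrightarrow> (vs!i, vs!Suc i) \<in> B))"

definition is_path :: "'a set \<Rightarrow> ('a \<times> 'a) set \<Rightarrow> ('a \<times> 'a) set \<Rightarrow> 'a list \<Rightarrow> emark list \<Rightarrow> bool" where
  "is_path S D B vs es \<longleftrightarrow> is_walk S D B vs es \<and> distinct vs"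

definition De :: "('a \<times> 'a) set \<Rightarrow> 'a \<Rightarrow> 'a set" where
  "De D v = {u. (v, u) \<in> D\<^sup>*}"

definition blocked :: "('a \<times> 'a) set \<Rightarrow> 'a set \<Rightarrow> 'a list \<Rightarrow> emark list \<Rightarrow> bool" where
  "blocked D W vs es \<longleftrightarrow>
     hd vs \<in> W \<or> last vs \<in> W \<or>
     (\<exists>i. 0 < i \<and> i < length vs - 1 \<and>
        (es!i = Fwd \<or> es!(i-1) = Bwd) \<and> vs!i \<in> W) \<or>
     (\<exists>i. 0 < i \<and> i < length vs - 1 \<and>
        es!(i-1) \<in> {Fwd, Bid} \<and> es!i \<in> {Bwd, Bid} \<and> De D (vs!i) \<inter> W = {})"

definition d_separated :: "'a set \<Rightarrow> ('a \<times> 'a) set \<Rightarrow> ('a \<times> 'a) set \<Rightarrow> 'a set \<Rightarrow> 'a set \<Rightarrow> 'a set \<Rightarrow> bool" where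
  "d_separated S D B X Y W \<longleftrightarrow>
     (\<forall>vs es. is_path S D B vs es \<and> hd vs \<in> X \<and> last vs \<in> Y \<longrightarrow> blocked D W vs es)"

definition is_ADMG :: "'v set \<Rightarrow> ('v \<times> 'v) set \<Rightarrow> ('v \<times> 'v) set \<Rightarrow> bool" where
  "is_ADMG V D B \<longleftrightarrow> finite V \<and> D \<subseteq> V \<times> V \<and> B \<subseteq> V \<times> V \<and> sym B \<and>
     (\<forall>x. (x, x) \<notin> B) \<and> acyclic D"

text \<open>An ADMG (V,D,B) is compatible with the cluster graph (C,Dc,Bc) via the cluster map f:
the clusters are the nonempty fibres f^{-1}(c) \<inter> V, c \<in> C (a partition of V), and the
cluster edges are exactly the images of the ADMG edges.\<close>
definition compatible :: "'v set \<Rightarrow> ('v \<times> 'v) set \<Rightarrow> ('v \<times> 'v) set \<Rightarrow> ('v \<Rightarrow> 'c) \<Rightarrow>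
     'c set \<Rightarrow> ('c \<times> 'c) set \<Rightarrow> ('c \<times> 'c) set \<Rightarrow> bool" where
  "compatible V D B f C Dc Bc \<longleftrightarrow> is_ADMG V D B \<and> f ` V = C \<and>
     Dc = {(f x, f y) | x y. (x, y) \<in> D} \<and> Bc = {(f x, f y) | x y. (x, y) \<in> B}"

definition cl_union :: "('v \<Rightarrow> 'c) \<Rightarrow> 'v set \<Rightarrow> 'c set \<Rightarrow> 'v set" where
  "cl_union f V CS = {v \<in> V. f v \<in> CS}"

end

theory Submission
  imports Defs "HOL-Library.Product_Lexorder"
begin

(* Give every cluster c two vertices: alpha c, used where an active path of the C-DMG has a
   collider at c, and beta c, used elsewhere on the path. Realise each cluster edge on all vertex
   pairs that increase a rank r; ranking makes the ADMG acyclic. All beta vertices are ranked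
   below all alpha vertices, so a cluster edge (c, d) is realised by beta c -> alpha d. Among
   alpha vertices the rank grows towards CW, so a collider alpha c reaches W along a shortest
   cluster path to CW. Among beta vertices the rank is the height of the path (+1 per forward,
   -1 per backward edge), so the non-collider steps of the lifted path keep their orientation.
   Non-colliders and endpoints stay in their clusters, so the lifted path is active. *)

definition cluster_reps :: "'v set \<Rightarrow> ('v \<Rightarrow> 'c) \<Rightarrow> 'c set \<Rightarrow> ('c \<Rightarrow> 'v) \<Rightarrow> ('c \<Rightarrow> 'v) \<Rightarrow> bool" where
  "cluster_reps V f C \<alpha> \<beta> \<longleftrightarrow>
     (\<forall>c\<in>C. \<alpha> c \<in> V \<and> \<beta> c \<in> V \<and> f (\<alpha> c) = c \<and> f (\<beta> c) = c \<and> \<alpha> c \<noteq> \<beta> c)"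

definition ranked_lift ::
    "'v set \<Rightarrow> ('v \<Rightarrow> 'c) \<Rightarrow> ('c \<times> 'c) set \<Rightarrow> ('v \<Rightarrow> 'r::preorder) \<Rightarrow> ('v \<times> 'v) set" where
  "ranked_lift V f Dc r = {(x, y). x \<in> V \<and> y \<in> V \<and> (f x, f y) \<in> Dc \<and> r x < r y}"

definition bidirected_lift :: "'v set \<Rightarrow> ('v \<Rightarrow> 'c) \<Rightarrow> ('c \<times> 'c) set \<Rightarrow> ('v \<times> 'v) set" where
  "bidirected_lift V f Bc = {(x, y). x \<in> V \<and> y \<in> V \<and> x \<noteq> y \<and> (f x, f y) \<in> Bc}"

definition dist_to :: "('a \<times> 'a) set \<Rightarrow> 'a set \<Rightarrow> 'a \<Rightarrow> nat" where
  "dist_to D W c = (LEAST k. \<exists>w\<in>W. (c, w) \<in> D ^^ k)"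

definition height :: "emark list \<Rightarrow> nat \<Rightarrow> int" where
  "height es i = (\<Sum>j<i. case es ! j of Fwd \<Rightarrow> 1 | Bwd \<Rightarrow> -1 | Bid \<Rightarrow> 0)"

definition is_collider :: "emark list \<Rightarrow> nat \<Rightarrow> bool" where
  "is_collider es i \<longleftrightarrow> 0 < i \<and> i < length es \<and> es ! (i - 1) \<in> {Fwd, Bid} \<and> es ! i \<in> {Bwd, Bid}"

lemma compatible_cluster_graph:
  assumes "compatible V D B f C Dc Bc"
  shows "finite C" "Dc \<subseteq> C \<times> C" "Bc \<subseteq> C \<times> C" "sym Bc"
  using assms unfolding compatible_def is_ADMG_def sym_def by blast+

lemma cluster_reps_exist:
  assumes "\<forall>c\<in>C. card {v \<in> V. f v = c} > 1"
  shows "\<exists>\<alpha> \<beta>. cluster_reps V f C \<alpha> \<beta>"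
proof -
  have "\<exists>x y. x \<in> V \<and> y \<in> V \<and> f x = c \<and> f y = c \<and> x \<noteq> y" if "c \<in> C" for c
  proof -
    let ?S = "{v \<in> V. f v = c}"
    have "\<not> card ?S \<le> Suc 0" using assms that by (simp add: not_le)
    moreover from this have "finite ?S" by (metis card.infinite zero_le)
    ultimately show ?thesis using card_le_Suc0_iff_eq by blast
  qed
  then show ?thesis unfolding cluster_reps_def by metis
qed

lemma acyclic_ranked_lift: "acyclic (ranked_lift V f Dc r)"
proof -
  have "r x < r y" if "(x, y) \<in> (ranked_lift V f Dc r)\<^sup>+" for x y
    using that by induction (auto simp: ranked_lift_def intro: less_trans)
  then show ?thesis unfolding acyclic_def by blast
qed

lemma image_ranked_lift:
  assumes "Dc \<subseteq> C \<times> C" "cluster_reps V f C \<alpha> \<beta>"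
    and "\<And>c d. c \<in> C \<Longrightarrow> d \<in> C \<Longrightarrow> r (\<beta> c) < r (\<alpha> d)"
  shows "{(f x, f y) | x y. (x, y) \<in> ranked_lift V f Dc r} = Dc"
proof -
  have "(c, d) \<in> {(f x, f y) | x y. (x, y) \<in> ranked_lift V f Dc r}" if "(c, d) \<in> Dc" for c d
  proof -
    have "c \<in> C" "d \<in> C" using that assms(1) by auto
    then have "(\<beta> c, \<alpha> d) \<in> ranked_lift V f Dc r" "f (\<beta> c) = c" "f (\<alpha> d) = d"
      using that assms(2,3) by (auto simp: ranked_lift_def cluster_reps_def)
    then show ?thesis by force
  qed
  then show ?thesis by (auto simp: ranked_lift_def)
qed

lemma image_bidirected_lift:
  assumes "Bc \<subseteq> C \<times> C" "cluster_reps V f C \<alpha> \<beta>"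
  shows "{(f x, f y) | x y. (x, y) \<in> bidirected_lift V f Bc} = Bc"
proof -
  have "(c, d) \<in> {(f x, f y) | x y. (x, y) \<in> bidirected_lift V f Bc}" if "(c, d) \<in> Bc" for c d
  proof -
    have cd: "c \<in> C" "d \<in> C" using that assms(1) by auto
    show ?thesis
    proof (cases "c = d")
      case True
      then have "(\<alpha> c, \<beta> d) \<in> bidirected_lift V f Bc" "f (\<alpha> c) = c" "f (\<beta> d) = d"
        using cd that assms(2) by (auto simp: bidirected_lift_def cluster_reps_def)
      then show ?thesis by force
    next
      case False
      have reps: "\<alpha> c \<in> V" "\<alpha> d \<in> V" "f (\<alpha> c) = c" "f (\<alpha> d) = d"
        using cd assms(2) by (auto simp: cluster_reps_def)
      with False that have "(\<alpha> c, \<alpha> d) \<in> bidirected_lift V f Bc"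
        by (auto simp: bidirected_lift_def)
      with reps show ?thesis by force
    qed
  qed
  then show ?thesis by (auto simp: bidirected_lift_def)
qed

lemma compatible_ranked_lift:
  assumes "finite V" "f ` V = C" "Dc \<subseteq> C \<times> C" "Bc \<subseteq> C \<times> C" "sym Bc"
    and "cluster_reps V f C \<alpha> \<beta>"
    and "\<And>c d. c \<in> C \<Longrightarrow> d \<in> C \<Longrightarrow> r (\<beta> c) < r (\<alpha> d)"
  shows "compatible V (ranked_lift V f Dc r) (bidirected_lift V f Bc) f C Dc Bc"
  using assms acyclic_ranked_lift
    image_ranked_lift[OF assms(3,6,7)] image_bidirected_lift[OF assms(4,6)]
  unfolding compatible_def is_ADMG_def
  by (auto simp: ranked_lift_def bidirected_lift_def sym_def)

lemma dist_to_descent: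
  assumes "De D c \<inter> W \<noteq> {}" "c \<notin> W"
  obtains d where "(c, d) \<in> D" "De D d \<inter> W \<noteq> {}" "dist_to D W d < dist_to D W c"
proof -
  have "\<exists>k. \<exists>w\<in>W. (c, w) \<in> D ^^ k"
    using assms(1) by (auto simp: De_def rtrancl_power)
  then have "\<exists>w\<in>W. (c, w) \<in> D ^^ dist_to D W c"
    unfolding dist_to_def by (rule LeastI_ex)
  then obtain w where w: "w \<in> W" "(c, w) \<in> D ^^ dist_to D W c" ..
  with assms(2) have "dist_to D W c \<noteq> 0" by (metis relpow.simps(1) pair_in_Id_conv)
  then obtain k where k: "dist_to D W c = Suc k" using not0_implies_Suc by blast
  with w obtain d where d: "(c, d) \<in> D" "(d, w) \<in> D ^^ k" using relpow_Suc_D2 by fastforce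
  have "dist_to D W d \<le> k" unfolding dist_to_def by (rule Least_le) (use d w in blast)
  moreover have "w \<in> De D d \<inter> W" using d(2) w(1) by (simp add: De_def relpow_imp_rtrancl)
  ultimately show ?thesis using that[of d] d(1) k by auto
qed

lemma De_ranked_lift_meets:
  assumes "Dc \<subseteq> C \<times> C" "cluster_reps V f C \<alpha> \<beta>"
    and "\<And>c d. c \<in> C \<Longrightarrow> d \<in> C \<Longrightarrow> dist_to Dc W d < dist_to Dc W c \<Longrightarrow> r (\<alpha> c) < r (\<alpha> d)"
    and "c \<in> C" "De Dc c \<inter> W \<noteq> {}"
  shows "De (ranked_lift V f Dc r) (\<alpha> c) \<inter> cl_union f V W \<noteq> {}"
  using assms(4,5)
proof (induction "dist_to Dc W c" arbitrary: c rule: less_induct)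
  case less
  show ?case
  proof (cases "c \<in> W")
    case True
    then have "\<alpha> c \<in> cl_union f V W"
      using less.prems(1) assms(2) by (auto simp: cl_union_def cluster_reps_def)
    then show ?thesis by (auto simp: De_def)
  next
    case False
    then obtain d where d: "(c, d) \<in> Dc" "De Dc d \<inter> W \<noteq> {}" "dist_to Dc W d < dist_to Dc W c"
      using less.prems(2) dist_to_descent by metis
    have "d \<in> C" using d(1) assms(1) by auto
    then have "(\<alpha> c, \<alpha> d) \<in> ranked_lift V f Dc r"
      using d less.prems(1) assms(2,3) by (auto simp: ranked_lift_def cluster_reps_def)
    moreover have "De (ranked_lift V f Dc r) (\<alpha> d) \<inter> cl_union f V W \<noteq> {}"
      using less.hyps d \<open>d \<in> C\<close> by blast
    ultimately show ?thesis by (auto simp: De_def intro: converse_rtrancl_into_rtrancl)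
  qed
qed

lemma height_Suc:
  "height es (Suc i) = height es i + (case es ! i of Fwd \<Rightarrow> 1 | Bwd \<Rightarrow> -1 | Bid \<Rightarrow> 0)"
  by (simp add: height_def)

lemma is_path_ranked_lift:
  assumes path: "is_path C Dc Bc vs es" and vs': "map f vs' = vs" "set vs' \<subseteq> V"
    and fwd: "\<And>i. i < length es \<Longrightarrow> es ! i = Fwd \<Longrightarrow> r (vs' ! i) < r (vs' ! Suc i)"
    and bwd: "\<And>i. i < length es \<Longrightarrow> es ! i = Bwd \<Longrightarrow> r (vs' ! Suc i) < r (vs' ! i)"
  shows "is_path V (ranked_lift V f Dc r) (bidirected_lift V f Bc) vs' es"
proof -
  have len: "length es = length vs' - 1" and "distinct vs'"
    using path vs'(1) by (auto simp: is_path_def is_walk_def distinct_map)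
  have edge: "(es ! i = Fwd \<longrightarrow> (vs ! i, vs ! Suc i) \<in> Dc) \<and>
      (es ! i = Bwd \<longrightarrow> (vs ! Suc i, vs ! i) \<in> Dc) \<and>
      (es ! i = Bid \<longrightarrow> (vs ! i, vs ! Suc i) \<in> Bc)" if "i < length es" for i
    using path that unfolding is_path_def is_walk_def by blast
  have lifted: "vs' ! i \<in> V \<and> vs' ! Suc i \<in> V \<and> f (vs' ! i) = vs ! i \<and>
      f (vs' ! Suc i) = vs ! Suc i \<and> vs' ! i \<noteq> vs' ! Suc i" if "i < length es" for i
    using that len vs' \<open>distinct vs'\<close> by (auto simp: nth_eq_iff_index_eq)
  show ?thesis
    using path vs' len \<open>distinct vs'\<close> edge lifted fwd bwd
    by (auto simp: is_path_def is_walk_def ranked_lift_def bidirected_lift_def)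
qed

lemma not_blocked_lift:
  assumes vs': "map f vs' = vs" "set vs' \<subseteq> V" and "vs \<noteq> []" "length es = length vs - 1"
    and active: "\<not> blocked Dc W vs es"
    and colliders: "\<And>i. is_collider es i \<Longrightarrow> De Dc (vs ! i) \<inter> W \<noteq> {} \<Longrightarrow>
      De D (vs' ! i) \<inter> cl_union f V W \<noteq> {}"
  shows "\<not> blocked D (cl_union f V W) vs' es"
proof
  have mem: "x \<in> cl_union f V W \<longleftrightarrow> f x \<in> W" if "x \<in> set vs'" for x
    using that vs'(2) by (auto simp: cl_union_def)
  have "vs' \<noteq> []" using vs'(1) \<open>vs \<noteq> []\<close> by auto
  then have ends: "hd vs' \<in> cl_union f V W \<longleftrightarrow> hd vs \<in> W" "last vs' \<in> cl_union f V W \<longleftrightarrow> last vs \<in> W"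
    using mem vs'(1) by (auto simp: hd_map last_map)
  have inner: "vs' ! i \<in> cl_union f V W \<longleftrightarrow> vs ! i \<in> W" if "i < length vs" for i
    using mem vs'(1) that by auto
  assume "blocked D (cl_union f V W) vs' es"
  then have "blocked Dc W vs es"
    using ends inner colliders vs'(1) \<open>length es = length vs - 1\<close>
    unfolding blocked_def is_collider_def by fastforce
  with active show False ..
qed

lemma exists_compatible_not_d_separated:
  fixes V :: "'v set" and f :: "'v \<Rightarrow> 'c"
  assumes "finite V" "f ` V = C" "Dc \<subseteq> C \<times> C" "Bc \<subseteq> C \<times> C" "sym Bc"
    and reps: "cluster_reps V f C \<alpha> \<beta>"
    and "\<not> d_separated C Dc Bc CX CY CW"
  shows "\<exists>D B. compatible V D B f C Dc Bc \<and>
    \<not> d_separated V D B (cl_union f V CX) (cl_union f V CY) (cl_union f V CW)"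
proof -
  obtain vs es where path: "is_path C Dc Bc vs es" and ends: "hd vs \<in> CX" "last vs \<in> CY"
    and active: "\<not> blocked Dc CW vs es"
    using assms(7) unfolding d_separated_def by blast
  define n where "n = length vs"
  define pos where "pos c = inv_into {..<n} (nth vs) c" for c
  \<comment> \<open>ordered lexicographically, so every alpha vertex lies above every beta vertex\<close>
  define r :: "'v \<Rightarrow> nat \<times> int" where
    "r x = (if x = \<alpha> (f x) then (1, - int (dist_to Dc CW (f x))) else (0, height es (pos (f x))))"
    for x
  define vs' where "vs' = map (\<lambda>i. if is_collider es i then \<alpha> (vs ! i) else \<beta> (vs ! i)) [0..<n]"
  have "vs \<noteq> []" "length es = n - 1" "distinct vs" "set vs \<subseteq> C"
    using path by (auto simp: is_path_def is_walk_def n_def)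
  have vs_C: "vs ! i \<in> C" if "i < n" for i
    using that \<open>set vs \<subseteq> C\<close> by (auto simp: n_def)
  have r_\<alpha>: "r (\<alpha> c) = (1, - int (dist_to Dc CW c))" and r_\<beta>: "r (\<beta> c) = (0, height es (pos c))"
    if "c \<in> C" for c
    using reps that by (auto simp: r_def cluster_reps_def)
  have pos_nth: "pos (vs ! i) = i" if "i < n" for i
    using that \<open>distinct vs\<close>
    by (auto simp: pos_def n_def inj_on_def nth_eq_iff_index_eq intro!: inv_into_f_f)
  have r_vs': "r (vs' ! i) =
      (if is_collider es i then (1, - int (dist_to Dc CW (vs ! i))) else (0, height es i))"
    if "i < n" for i
    using that r_\<alpha> r_\<beta> pos_nth vs_C by (auto simp: vs'_def n_def)
  have vs': "map f vs' = vs" "set vs' \<subseteq> V"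
    using reps vs_C by (auto simp: vs'_def n_def cluster_reps_def intro!: nth_equalityI)
  let ?D = "ranked_lift V f Dc r" and ?B = "bidirected_lift V f Bc"
  have "compatible V ?D ?B f C Dc Bc"
    using assms(1-5) reps by (rule compatible_ranked_lift) (simp add: r_\<alpha> r_\<beta>)
  moreover have "is_path V ?D ?B vs' es"
    using path vs' by (rule is_path_ranked_lift)
      (use r_vs' \<open>length es = n - 1\<close> in \<open>auto simp: is_collider_def height_Suc\<close>)
  moreover have "\<not> blocked ?D (cl_union f V CW) vs' es"
    using vs' \<open>vs \<noteq> []\<close> \<open>length es = n - 1\<close>[unfolded n_def] active
  proof (rule not_blocked_lift)
    fix i assume "is_collider es i" "De Dc (vs ! i) \<inter> CW \<noteq> {}"
    moreover have "i < n"
      using \<open>is_collider es i\<close> \<open>length es = n - 1\<close> by (auto simp: is_collider_def)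
    ultimately have "De ?D (\<alpha> (vs ! i)) \<inter> cl_union f V CW \<noteq> {}"
      by (intro De_ranked_lift_meets[OF assms(3) reps]) (auto simp: vs_C r_\<alpha>)
    then show "De ?D (vs' ! i) \<inter> cl_union f V CW \<noteq> {}"
      using \<open>i < n\<close> \<open>is_collider es i\<close> by (simp add: vs'_def)
  qed
  moreover have "hd vs' \<in> cl_union f V CX" "last vs' \<in> cl_union f V CY"
    using ends vs' \<open>vs \<noteq> []\<close> by (auto simp: cl_union_def hd_map last_map)
  ultimately show ?thesis unfolding d_separated_def by blast
qed

theorem theorem2:
  fixes C :: "'c set" and Dc Bc :: "('c \<times> 'c) set" and CX CY CW :: "'c set"
  assumes "CX \<subseteq> C" and "CY \<subseteq> C" and "CW \<subseteq> C"
    and "CX \<inter> CY = {}" and "CX \<inter> CW = {}" and "CY \<inter> CW = {}"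
    and notsep: "\<not> d_separated C Dc Bc CX CY CW"
  shows "((\<exists>(V :: 'v set) f D B. compatible V D B f C Dc Bc) \<longrightarrow>
           (\<exists>(V :: ('c \<times> nat) set) f D B. compatible V D B f C Dc Bc \<and>
              \<not> d_separated V D B (cl_union f V CX) (cl_union f V CY) (cl_union f V CW))) \<and>
         (\<forall>(V :: 'v set) f D B. compatible V D B f C Dc Bc \<and>
              (\<forall>c \<in> C. card {v \<in> V. f v = c} > 1) \<longrightarrow>
           (\<exists>D' B'. compatible V D' B' f C Dc Bc \<and>
              \<not> d_separated V D' B' (cl_union f V CX) (cl_union f V CY) (cl_union f V CW)))"
proof (intro conjI impI allI)
  assume "\<exists>(V :: 'v set) f D B. compatible V D B f C Dc Bc"
  then obtain V :: "'v set" and f D B where "compatible V D B f C Dc Bc" by blast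
  note cluster_graph = compatible_cluster_graph[OF this]
  let ?V = "C \<times> {0, 1 :: nat}"
  have "finite ?V" "fst ` ?V = C" using cluster_graph(1) by auto
  moreover note cluster_graph(2-4)
  moreover have "cluster_reps ?V fst C (\<lambda>c. (c, 1)) (\<lambda>c. (c, 0))"
    by (simp add: cluster_reps_def)
  ultimately have "\<exists>D B. compatible ?V D B fst C Dc Bc \<and>
      \<not> d_separated ?V D B (cl_union fst ?V CX) (cl_union fst ?V CY) (cl_union fst ?V CW)"
    using notsep by (rule exists_compatible_not_d_separated)
  then show "\<exists>(V :: ('c \<times> nat) set) f D B. compatible V D B f C Dc Bc \<and>
      \<not> d_separated V D B (cl_union f V CX) (cl_union f V CY) (cl_union f V CW)"
    by (intro exI[of _ ?V] exI[of _ fst])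
next
  fix V :: "'v set" and f D B
  assume asm: "compatible V D B f C Dc Bc \<and> (\<forall>c \<in> C. card {v \<in> V. f v = c} > 1)"
  then have "finite V" "f ` V = C" by (simp_all add: compatible_def is_ADMG_def)
  moreover note compatible_cluster_graph(2-4)[OF asm[THEN conjunct1]]
  moreover obtain \<alpha> \<beta> where "cluster_reps V f C \<alpha> \<beta>"
    using cluster_reps_exist asm by blast
  ultimately show "\<exists>D' B'. compatible V D' B' f C Dc Bc \<and>
      \<not> d_separated V D' B' (cl_union f V CX) (cl_union f V CY) (cl_union f V CW)"
    using notsep by (rule exists_compatible_not_d_separated)
qed

end
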